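(* Let $m,n\ge 0$ be integers with $m-n\equiv 0\pmod 2$, put $N=m+n$, and let $1<r<\infty$. Then $$\left(\frac{2}{r+1}+\sum_{j=0}^{N-1}\frac{\binom{N}{j+1}^{r+1}-\binom{N}{j}^{r+1}}{(r+1)\left[\binom{N}{j+1}-\binom{N}{j}\right]}\right)^{1/r} \le 2^m\Big(\sum_{j=0}^{n}\binom{n}{j}^r\Big)^{1/r}.$$
   Context: Binomial coefficients have their usual meaning. *)

theory Defs
  imports Complex_Main
begin

end

theory Submission
  imports Defs "HOL-Analysis.Analysis"
begin

text \<open>
  Each summand is the mean value of \<open>x powr r\<close> between two neighbouring binomial
  coefficients; by convexity (Hermite--Hadamard) it is at most the average of the two
  endpoint values. Summing telescopes into \<open>S(N) - 1\<close>, where \<open>S(k)\<close> is the sum of the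
  \<open>r\<close>-th powers of the binomial coefficients of order \<open>k\<close>, and \<open>2/(r+1) \<le> 1\<close>. Finally
  Pascal's rule and \<open>(a+b)^r \<le> 2^(r-1) (a^r+b^r)\<close> give \<open>S(k+1) \<le> 2^r S(k)\<close>, hence
  \<open>S(m+n) \<le> 2^(m r) S(n)\<close>.
\<close>

lemma powr_diff_le_tangent:
  fixes x b r :: real
  assumes "0 < b" "0 < x" "1 \<le> r"
  shows "x powr r - b powr r \<le> r * x powr (r - 1) * (x - b)"
proof -
  have deriv: "((\<lambda>x. x powr r) has_field_derivative r * x powr (r - 1)) (at x within {0<..})"
    using assms by (auto intro!: derivative_eq_intros)
  have "b powr r - x powr r \<ge> r * x powr (r - 1) * (b - x)"
    by (rule convex_on_imp_above_tangent[OF powr_convex[OF assms(3)] _ _ _ deriv])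
       (use assms in \<open>auto simp: interior_open\<close>)
  then show ?thesis by (simp add: algebra_simps)
qed

lemma powr_mean_value_le_average_less:
  fixes a b r :: real
  assumes "0 < b" "b < a" "1 \<le> r"
  shows "(a powr (r+1) - b powr (r+1)) / ((r + 1) * (a - b)) \<le> (a powr r + b powr r) / 2"
proof -
  define f where
    "f = (\<lambda>x. (x - b) * (x powr r + b powr r) / 2 - (x powr (r+1) - b powr (r+1)) / (r+1))"
  have "f b \<le> f a"
  proof (rule DERIV_nonneg_imp_nondecreasing[OF less_imp_le[OF assms(2)]])
    fix x assume "b \<le> x" "x \<le> a"
    with assms have "0 < x" by auto
    then have "DERIV f x :> (x powr r + b powr r) / 2 + (x - b) * (r * x powr (r - 1)) / 2
                             - x powr r"
      unfolding f_def using assms by (auto intro!: derivative_eq_intros)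
    moreover have "x powr r - b powr r \<le> r * x powr (r - 1) * (x - b)"
      using powr_diff_le_tangent[of b x r] assms \<open>0 < x\<close> by auto
    ultimately show "\<exists>y. DERIV f x :> y \<and> 0 \<le> y"
      by (auto simp: field_simps)
  qed
  then have "(a powr (r+1) - b powr (r+1)) / (r+1) \<le> (a - b) * (a powr r + b powr r) / 2"
    unfolding f_def by simp
  with assms show ?thesis
    by (simp add: divide_simps mult.commute mult.left_commute)
qed

text \<open>For \<open>a = b\<close> the left-hand side is \<open>0 / 0 = 0\<close>, so the inequality still holds.\<close>

lemma powr_mean_value_le_average:
  fixes a b r :: real
  assumes "0 < a" "0 < b" "1 \<le> r"
  shows "(a powr (r+1) - b powr (r+1)) / ((r + 1) * (a - b)) \<le> (a powr r + b powr r) / 2"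
proof (cases a b rule: linorder_cases)
  case less
  have "(a powr (r+1) - b powr (r+1)) / ((r + 1) * (a - b))
      = (b powr (r+1) - a powr (r+1)) / ((r + 1) * (b - a))"
    by (metis minus_diff_eq minus_divide_divide mult_minus_right)
  with powr_mean_value_le_average_less[OF assms(1) less assms(3)] show ?thesis
    by (simp add: add.commute)
qed (use assms powr_mean_value_le_average_less in auto)

lemma powr_mean_value_nonneg:
  fixes a b r :: real
  assumes "0 < a" "0 < b" "0 < r + 1"
  shows "0 \<le> (a powr (r+1) - b powr (r+1)) / ((r + 1) * (a - b))"
proof (cases a b rule: linorder_cases)
  case less
  with assms have "a powr (r+1) < b powr (r+1)" by (simp add: powr_less_mono2)
  with less assms show ?thesis
    by (intro divide_nonpos_nonpos) (auto simp: mult_nonneg_nonpos)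
next
  case greater
  with assms have "b powr (r+1) < a powr (r+1)" by (simp add: powr_less_mono2)
  with greater assms show ?thesis by (intro divide_nonneg_nonneg) auto
qed simp

lemma powr_add_le_convex:
  fixes a b r :: real
  assumes "0 \<le> a" "0 < b" "1 \<le> r"
  shows "(a + b) powr r \<le> 2 powr (r - 1) * (a powr r + b powr r)"
proof (cases "a = 0")
  case True
  have "1 \<le> 2 powr (r - 1)" using assms by (simp add: ge_one_powr_ge_zero)
  with True assms show ?thesis by simp
next
  case False
  with assms have "((a + b) / 2) powr r \<le> (a powr r + b powr r) / 2"
    using convex_onD[OF powr_convex[OF assms(3)], of "1/2" a b]
    by (simp add: field_simps)
  then have "2 powr r * ((a + b) / 2) powr r \<le> 2 powr r * ((a powr r + b powr r) / 2)"
    by simp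
  with assms show ?thesis by (simp add: powr_divide powr_diff)
qed

definition binomial_power_sum :: "real \<Rightarrow> nat \<Rightarrow> real" where
  "binomial_power_sum r k = (\<Sum>j\<le>k. real (k choose j) powr r)"

lemma binomial_power_sum_ge_1: "1 \<le> binomial_power_sum r k"
  using member_le_sum[of 0 "{..k}" "\<lambda>j. real (k choose j) powr r"]
  by (simp add: binomial_power_sum_def)

lemma binomial_power_sum_lessThan:
  "(\<Sum>j<k. real (k choose j) powr r) = binomial_power_sum r k - 1"
  by (simp add: binomial_power_sum_def lessThan_Suc_atMost[symmetric])

lemma binomial_power_sum_lessThan_Suc:
  "(\<Sum>j<k. real (k choose Suc j) powr r) = binomial_power_sum r k - 1"
proof -
  have "binomial_power_sum r k = (\<Sum>j<Suc k. real (k choose j) powr r)"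
    by (simp add: binomial_power_sum_def lessThan_Suc_atMost)
  also have "\<dots> = 1 + (\<Sum>j<k. real (k choose Suc j) powr r)"
    by (subst sum.lessThan_Suc_shift) simp
  finally show ?thesis by simp
qed

lemma binomial_power_sum_Suc_le:
  assumes "1 \<le> r"
  shows "binomial_power_sum r (Suc k) \<le> 2 powr r * binomial_power_sum r k"
proof -
  let ?S = "binomial_power_sum r k"
  have "binomial_power_sum r (Suc k)
      = 1 + (\<Sum>j\<le>k. (real (k choose j) + real (k choose Suc j)) powr r)"
    unfolding binomial_power_sum_def by (subst sum.atMost_Suc_shift) simp
  also have "\<dots> = 1 + (\<Sum>j<k. (real (k choose j) + real (k choose Suc j)) powr r) + 1"
    by (simp add: lessThan_Suc_atMost[symmetric] binomial_eq_0)
  also have "\<dots> \<le> 1 + (\<Sum>j<k. 2 powr (r - 1)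
                       * (real (k choose j) powr r + real (k choose Suc j) powr r)) + 1"
    using assms by (intro add_mono sum_mono powr_add_le_convex) auto
  also have "\<dots> = 2 + 2 powr (r - 1) * (2 * ?S - 2)"
    by (simp add: sum_distrib_left[symmetric] sum.distrib binomial_power_sum_lessThan
                  binomial_power_sum_lessThan_Suc)
  also have "\<dots> \<le> 2 powr r * ?S"
  proof -
    have "1 \<le> 2 powr (r - 1)" using assms by (simp add: ge_one_powr_ge_zero)
    moreover have "2 powr r = 2 * 2 powr (r - 1)" by (simp add: powr_diff)
    ultimately show ?thesis by (simp add: algebra_simps)
  qed
  finally show ?thesis .
qed

lemma binomial_power_sum_add_le:
  assumes "1 \<le> r"
  shows "binomial_power_sum r (m + n) \<le> 2 powr (m * r) * binomial_power_sum r n"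
proof (induction m)
  case (Suc m)
  have "binomial_power_sum r (Suc m + n) \<le> 2 powr r * binomial_power_sum r (m + n)"
    using binomial_power_sum_Suc_le[OF assms] by simp
  also have "\<dots> \<le> 2 powr r * (2 powr (m * r) * binomial_power_sum r n)"
    using Suc by (intro mult_left_mono) auto
  also have "\<dots> = 2 powr (Suc m * r) * binomial_power_sum r n"
    by (simp add: powr_add[symmetric] algebra_simps)
  finally show ?case .
qed simp

lemma sum_binomial_mean_values_le:
  assumes "1 \<le> r"
  shows "(\<Sum>j<N. (real (N choose (j+1)) powr (r+1) - real (N choose j) powr (r+1))
                  / ((r + 1) * (real (N choose (j+1)) - real (N choose j))))
         \<le> binomial_power_sum r N - 1"
proof -
  have "(\<Sum>j<N. (real (N choose (j+1)) powr (r+1) - real (N choose j) powr (r+1))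
                  / ((r + 1) * (real (N choose (j+1)) - real (N choose j))))
      \<le> (\<Sum>j<N. (real (N choose (j+1)) powr r + real (N choose j) powr r) / 2)"
    using assms by (intro sum_mono powr_mean_value_le_average) auto
  also have "\<dots> = binomial_power_sum r N - 1"
    by (simp add: sum.distrib sum_divide_distrib[symmetric] binomial_power_sum_lessThan
                  binomial_power_sum_lessThan_Suc)
  finally show ?thesis .
qed

theorem mainTheorem10:
  fixes m n :: nat and r :: real
  assumes "(int m - int n) mod 2 = 0"
    and "1 < r"
  shows "(let N = m + n in
           (2 / (r + 1) +
            (\<Sum>j<N. (real (N choose (j+1)) powr (r+1) - real (N choose j) powr (r+1))
                     / ((r + 1) * (real (N choose (j+1)) - real (N choose j))))) powr (1 / r))
         \<le> 2 ^ m * (\<Sum>j\<le>n. real (n choose j) powr r) powr (1 / r)"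
proof -
  define N where "N = m + n"
  define T where "T = (\<Sum>j<N. (real (N choose (j+1)) powr (r+1) - real (N choose j) powr (r+1))
                     / ((r + 1) * (real (N choose (j+1)) - real (N choose j))))"
  have "0 \<le> T"
    unfolding T_def using assms(2) by (intro sum_nonneg) (simp add: powr_mean_value_nonneg)
  moreover have "2 / (r + 1) + T \<le> binomial_power_sum r N"
  proof -
    have "2 / (r + 1) \<le> 1" using assms(2) by simp
    moreover have "T \<le> binomial_power_sum r N - 1"
      unfolding T_def using assms(2) by (intro sum_binomial_mean_values_le) simp
    ultimately show ?thesis by linarith
  qed
  ultimately have "(2 / (r + 1) + T) powr (1 / r) \<le> binomial_power_sum r N powr (1 / r)"
    using assms(2) by (intro powr_mono2) auto
  also have "\<dots> \<le> (2 powr (m * r) * binomial_power_sum r n) powr (1 / r)"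
    using binomial_power_sum_add_le[of r m n] binomial_power_sum_ge_1[of r N] assms(2)
    unfolding N_def by (intro powr_mono2) auto
  also have "\<dots> = 2 ^ m * binomial_power_sum r n powr (1 / r)"
    using assms(2) binomial_power_sum_ge_1[of r n]
    by (simp add: powr_mult powr_powr powr_realpow)
  finally show ?thesis
    unfolding Let_def N_def[symmetric] T_def[symmetric] binomial_power_sum_def .
qed

end
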